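(* In the setting of the context, with $d=[G:H]$, the degree of the Kanev correspondence is $$\deg\overline K_w=1-d\,((w,w)+1).$$
   Context: $G$ finite group, $\Lambda$ absolutely irreducible $\mathbb Z[G]$-module of finite rank, $W=\Lambda\otimes\mathbb Q$, $w$ a weight ($gw-w\in\Lambda$ for all $g$), $(\,,\,)$ the negative definite $G$-invariant symmetric bilinear form on $W$ with (i) $(w,\lambda)\in\mathbb Z$ for all $\lambda\in\Lambda$ and (ii) every $G$-invariant symmetric form satisfying (i) is an integer multiple of it; $H=\mathrm{Stab}_G(w)$. $\pi:X\to\mathbb P^1$ Galois covering with group $G$, $C=X/H$, $\psi:C\to\mathbb P^1$. Kanev correspondence: $U$ = complement of the branch locus of $\psi$, $\xi_0\in U$, points of $\psi^{-1}(\xi_0)$ labelled by $Gw$ via a fixed $G$-equivariant bijection; for $\xi\in U$ a path $\gamma_\xi$ in $U$ to $\xi_0$ defines $\mu:\psi^{-1}(\xi)\to Gw$ (endpoint of the lift starting at $c$); $\overline K_w$ is the closure in $C\times C$ of the divisor given over $U$ by $\overline K_w(c)=\sum_{v\in Gw,\,v\ne\mu(c)}[(\mu(c),v)-(w,w)-1]\mu^{-1}(v)$. The degree of a correspondence $D$ is the degree of the divisor $D(c)$. *)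

theory Defs
  imports "HOL-Algebra.Coset" "HOL-Analysis.Finite_Cartesian_Product"
begin

text \<open>The lattice Lambda is modelled as the integer points of W = rat^'n
(a choice of Z-basis of Lambda); G acts on Lambda through integer matrices rho g.\<close>

definition lat :: "(rat^'n) set" where
  "lat = {v. \<forall>i. v $ i \<in> \<int>}"

definition act :: "('g \<Rightarrow> int^'n^'n) \<Rightarrow> 'g \<Rightarrow> rat^'n \<Rightarrow> rat^'n" where
  "act \<rho> g v = (\<chi> i. \<Sum>j\<in>UNIV. of_int (\<rho> g $ i $ j) * v $ j)"

definition cact :: "('g \<Rightarrow> int^'n^'n) \<Rightarrow> 'g \<Rightarrow> complex^'n \<Rightarrow> complex^'n" where
  "cact \<rho> g v = (\<chi> i. \<Sum>j\<in>UNIV. of_int (\<rho> g $ i $ j) * v $ j)"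

definition is_int_rep :: "('g, 'b) monoid_scheme \<Rightarrow> ('g \<Rightarrow> int^'n^'n) \<Rightarrow> bool" where
  "is_int_rep G \<rho> \<longleftrightarrow> \<rho> \<one>\<^bsub>G\<^esub> = mat 1 \<and>
     (\<forall>x\<in>carrier G. \<forall>y\<in>carrier G. \<rho> (x \<otimes>\<^bsub>G\<^esub> y) = \<rho> x ** \<rho> y)"

text \<open>Absolute irreducibility: Lambda \<otimes> C = complex^'n has no G-invariant
complex subspaces other than 0 and the whole space.\<close>
definition abs_irreducible :: "('g, 'b) monoid_scheme \<Rightarrow> ('g \<Rightarrow> int^'n^'n) \<Rightarrow> bool" where
  "abs_irreducible G \<rho> \<longleftrightarrow>
    (\<forall>S :: (complex^'n) set.
       0 \<in> S \<and> (\<forall>x\<in>S. \<forall>y\<in>S. x + y \<in> S) \<and> (\<forall>c x. x \<in> S \<longrightarrow> (\<chi> i. c * x $ i) \<in> S)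
       \<and> (\<forall>g\<in>carrier G. \<forall>x\<in>S. cact \<rho> g x \<in> S)
       \<longrightarrow> S = {0} \<or> S = UNIV)"

definition is_weight :: "('g, 'b) monoid_scheme \<Rightarrow> ('g \<Rightarrow> int^'n^'n) \<Rightarrow> rat^'n \<Rightarrow> bool" where
  "is_weight G \<rho> w \<longleftrightarrow> (\<forall>g\<in>carrier G. act \<rho> g w - w \<in> lat)"

definition bil :: "rat^'n^'n \<Rightarrow> rat^'n \<Rightarrow> rat^'n \<Rightarrow> rat" where
  "bil B x y = (\<Sum>i\<in>UNIV. \<Sum>j\<in>UNIV. x $ i * B $ i $ j * y $ j)"

definition sym_inv_form :: "('g, 'b) monoid_scheme \<Rightarrow> ('g \<Rightarrow> int^'n^'n) \<Rightarrow> rat^'n^'n \<Rightarrow> bool" where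
  "sym_inv_form G \<rho> B \<longleftrightarrow> (\<forall>i j. B $ i $ j = B $ j $ i) \<and>
     (\<forall>g\<in>carrier G. \<forall>x y. bil B (act \<rho> g x) (act \<rho> g y) = bil B x y)"

definition normalized_form ::
  "('g, 'b) monoid_scheme \<Rightarrow> ('g \<Rightarrow> int^'n^'n) \<Rightarrow> rat^'n \<Rightarrow> rat^'n^'n \<Rightarrow> bool" where
  "normalized_form G \<rho> w B \<longleftrightarrow> sym_inv_form G \<rho> B \<and>
     (\<forall>x. x \<noteq> 0 \<longrightarrow> bil B x x < 0) \<and>
     (\<forall>l\<in>lat. bil B w l \<in> \<int>) \<and>
     (\<forall>B'. sym_inv_form G \<rho> B' \<and> (\<forall>l\<in>lat. bil B' w l \<in> \<int>) \<longrightarrow>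
        (\<exists>k::int. \<forall>x y. bil B' x y = of_int k * bil B x y))"

definition orbit :: "('g, 'b) monoid_scheme \<Rightarrow> ('g \<Rightarrow> int^'n^'n) \<Rightarrow> rat^'n \<Rightarrow> (rat^'n) set" where
  "orbit G \<rho> w = (\<lambda>g. act \<rho> g w) ` carrier G"

definition stab :: "('g, 'b) monoid_scheme \<Rightarrow> ('g \<Rightarrow> int^'n^'n) \<Rightarrow> rat^'n \<Rightarrow> 'g set" where
  "stab G \<rho> w = {g \<in> carrier G. act \<rho> g w = w}"

text \<open>Kanev divisor K_w(c) on the fibre F = psi^{-1}(xi) over a point xi of U,
with labelling mu : F -> Gw (a bijection): it is
sum_{v in Gw, v \<noteq> mu c} [(mu c, v) - (w,w) - 1] mu^{-1}(v),
represented as a (rational-valued) divisor, i.e. a function with finite support.\<close>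
definition kanev_divisor ::
  "rat^'n^'n \<Rightarrow> rat^'n \<Rightarrow> 'c set \<Rightarrow> ('c \<Rightarrow> rat^'n) \<Rightarrow> 'c \<Rightarrow> 'c \<Rightarrow> rat" where
  "kanev_divisor B w F \<mu> c = (\<lambda>p. if p \<in> F \<and> \<mu> p \<noteq> \<mu> c
       then bil B (\<mu> c) (\<mu> p) - bil B w w - 1 else 0)"

definition divisor_degree :: "('c \<Rightarrow> rat) \<Rightarrow> rat" where
  "divisor_degree D = (\<Sum>p\<in>{p. D p \<noteq> 0}. D p)"

end

theory Submission
  imports Defs
begin

text \<open>The sum s of the orbit Gw is fixed by G, so the complex line it spans is
G-invariant; absolute irreducibility and nontriviality of the action force s = 0.
Hence the form values (u, v), v ranging over Gw, sum to 0 for every u in Gw, so the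
off-diagonal ones sum to -(w, w). The divisor therefore has degree
-(w, w) - (|Gw| - 1)((w, w) + 1), and |Gw| = [G : H] by the orbit-stabilizer theorem.\<close>

lemma act_add: "act \<rho> g (x + y) = act \<rho> g x + act \<rho> g y"
  by (simp add: act_def vec_eq_iff algebra_simps sum.distrib)

lemma act_zero: "act \<rho> g 0 = 0"
  by (simp add: act_def vec_eq_iff)

lemma act_sum: "act \<rho> g (sum f A) = (\<Sum>a\<in>A. act \<rho> g (f a))"
  by (induction A rule: infinite_finite_induct) (auto simp: act_zero act_add)

lemma bil_add_right: "bil B u (x + y) = bil B u x + bil B u y"
  by (simp add: bil_def algebra_simps sum.distrib)

lemma bil_zero_right: "bil B u 0 = 0"
  by (simp add: bil_def)

lemma bil_sum_right: "bil B u (sum f A) = (\<Sum>a\<in>A. bil B u (f a))"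
  by (induction A rule: infinite_finite_induct) (auto simp: bil_zero_right bil_add_right)

lemma cact_of_rat_line:
  "cact \<rho> g (\<chi> i. t * of_rat (s $ i)) = (\<chi> i. t * of_rat (act \<rho> g s $ i))"
  by (simp add: cact_def act_def vec_eq_iff of_rat_sum of_rat_mult sum_distrib_left
      mult.left_commute)

lemma cact_axis: "cact \<rho> g (axis j 1) $ i = of_int (\<rho> g $ i $ j)"
proof -
  have "(\<Sum>k\<in>UNIV. complex_of_int (\<rho> g $ i $ k) * axis j 1 $ k)
      = (\<Sum>k\<in>UNIV. if k = j then complex_of_int (\<rho> g $ i $ k) else 0)"
    by (intro sum.cong) (auto simp: axis_def)
  then show ?thesis by (simp add: cact_def)
qed

lemma cact_fixes_all_imp_mat_1:
  assumes "\<And>x. cact \<rho> g x = x"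
  shows "\<rho> g = mat 1"
proof -
  have "\<rho> g $ i $ j = (if i = j then 1 else 0)" for i j
  proof -
    have "(of_int (\<rho> g $ i $ j) :: complex) = axis j 1 $ i"
      unfolding cact_axis[symmetric] using assms by simp
    then show ?thesis by (cases "i = j") (simp_all add: axis_def)
  qed
  then show ?thesis by (simp add: vec_eq_iff mat_def)
qed

lemma abs_irreducible_fixed_vector_eq_0:
  assumes irr: "abs_irreducible G \<rho>"
    and nontriv: "\<exists>g\<in>carrier G. \<rho> g \<noteq> mat 1"
    and fixed: "\<And>g. g \<in> carrier G \<Longrightarrow> act \<rho> g s = s"
  shows "s = 0"
proof (rule ccontr)
  assume "s \<noteq> 0"
  define S where "S = range (\<lambda>t. \<chi> i. t * (of_rat (s $ i) :: complex))"
  have "0 \<in> S" unfolding S_def by (auto intro!: image_eqI[of _ _ 0] simp: vec_eq_iff)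
  moreover have "\<forall>x\<in>S. \<forall>y\<in>S. x + y \<in> S"
    unfolding S_def by (auto intro!: image_eqI[of _ _ "_ + _"] simp: vec_eq_iff algebra_simps)
  moreover have "\<forall>c x. x \<in> S \<longrightarrow> (\<chi> i. c * x $ i) \<in> S"
    unfolding S_def by (auto intro!: image_eqI[of _ _ "_ * _"] simp: vec_eq_iff)
  moreover have "\<forall>g\<in>carrier G. \<forall>x\<in>S. cact \<rho> g x \<in> S"
    unfolding S_def using fixed by (auto simp: cact_of_rat_line)
  ultimately have "S = {0} \<or> S = UNIV"
    using irr unfolding abs_irreducible_def by blast
  moreover have "S \<noteq> {0}"
  proof
    assume "S = {0}"
    then have "(\<chi> i. 1 * (of_rat (s $ i) :: complex)) = 0" unfolding S_def by blast
    with \<open>s \<noteq> 0\<close> show False by (simp add: vec_eq_iff)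
  qed
  ultimately have "S = UNIV" by simp
  obtain g where g: "g \<in> carrier G" "\<rho> g \<noteq> mat 1" using nontriv by blast
  have "cact \<rho> g x = x" for x
  proof -
    from \<open>S = UNIV\<close> obtain t where "x = (\<chi> i. t * of_rat (s $ i))" unfolding S_def by blast
    then show ?thesis using fixed[OF g(1)] by (simp add: cact_of_rat_line)
  qed
  then have "\<rho> g = mat 1" by (rule cact_fixes_all_imp_mat_1)
  with g show False by simp
qed

locale int_rep = group G for G :: "('g, 'b) monoid_scheme" (structure) +
  fixes \<rho> :: "'g \<Rightarrow> int^'n^'n"
  assumes is_int_rep: "is_int_rep G \<rho>"
begin

lemma act_mult:
  assumes "x \<in> carrier G" "y \<in> carrier G"
  shows "act \<rho> (x \<otimes> y) v = act \<rho> x (act \<rho> y v)"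
proof -
  have "\<rho> (x \<otimes> y) = \<rho> x ** \<rho> y" using assms is_int_rep unfolding is_int_rep_def by blast
  then show ?thesis
    unfolding act_def
    by (simp add: vec_eq_iff matrix_matrix_mult_def of_int_sum sum_distrib_left
        sum_distrib_right mult.assoc) (intro allI sum.swap)
qed

lemma act_one: "act \<rho> \<one> v = v"
proof -
  have "\<rho> \<one> = mat 1" using is_int_rep unfolding is_int_rep_def by blast
  moreover have "(\<Sum>j\<in>UNIV. rat_of_int (if i = j then 1 else 0) * v $ j)
      = (\<Sum>j\<in>UNIV. if i = j then v $ j else 0)" for i
    by (intro sum.cong) auto
  ultimately show ?thesis by (simp add: act_def vec_eq_iff mat_def)
qed

lemma act_inv_act: "g \<in> carrier G \<Longrightarrow> act \<rho> (inv g) (act \<rho> g v) = v"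
  by (simp flip: act_mult add: act_one)

lemma act_act_inv: "g \<in> carrier G \<Longrightarrow> act \<rho> g (act \<rho> (inv g) v) = v"
  by (simp flip: act_mult add: act_one)

lemma inj_on_act: "g \<in> carrier G \<Longrightarrow> inj_on (act \<rho> g) A"
  by (metis inj_onI act_inv_act)

lemma finite_orbit: "finite (carrier G) \<Longrightarrow> finite (orbit G \<rho> w)"
  by (simp add: orbit_def)

lemma act_image_orbit:
  assumes "g \<in> carrier G"
  shows "act \<rho> g ` orbit G \<rho> w = orbit G \<rho> w"
proof
  show "act \<rho> g ` orbit G \<rho> w \<subseteq> orbit G \<rho> w"
    using assms by (auto simp: orbit_def simp flip: act_mult)
  show "orbit G \<rho> w \<subseteq> act \<rho> g ` orbit G \<rho> w"
  proof
    fix v assume "v \<in> orbit G \<rho> w"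
    then obtain h where h: "h \<in> carrier G" "v = act \<rho> h w" by (auto simp: orbit_def)
    then have "v = act \<rho> g (act \<rho> (inv g \<otimes> h) w)"
      using assms by (simp add: act_mult act_act_inv)
    moreover have "act \<rho> (inv g \<otimes> h) w \<in> orbit G \<rho> w"
      using assms h by (auto simp: orbit_def)
    ultimately show "v \<in> act \<rho> g ` orbit G \<rho> w" by blast
  qed
qed

lemma act_orbit_sum:
  assumes "g \<in> carrier G"
  shows "act \<rho> g (\<Sum>(orbit G \<rho> w)) = \<Sum>(orbit G \<rho> w)"
proof -
  have "act \<rho> g (\<Sum>(orbit G \<rho> w)) = \<Sum>(act \<rho> g ` orbit G \<rho> w)"
    by (simp add: act_sum sum.reindex[OF inj_on_act[OF assms]])
  then show ?thesis by (simp add: act_image_orbit[OF assms])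
qed

lemma subgroup_stab: "subgroup (stab G \<rho> w) G"
proof (rule subgroupI)
  show "stab G \<rho> w \<noteq> {}" using act_one by (auto simp: stab_def)
  show "inv a \<in> stab G \<rho> w" if "a \<in> stab G \<rho> w" for a
    using that act_inv_act[of a w] by (auto simp: stab_def)
qed (auto simp: stab_def act_mult)

lemma card_act_fibre:
  assumes "g0 \<in> carrier G"
  shows "card {g \<in> carrier G. act \<rho> g w = act \<rho> g0 w} = card (stab G \<rho> w)"
proof -
  have "{g \<in> carrier G. act \<rho> g w = act \<rho> g0 w} = (\<otimes>) g0 ` stab G \<rho> w"
  proof
    show "{g \<in> carrier G. act \<rho> g w = act \<rho> g0 w} \<subseteq> (\<otimes>) g0 ` stab G \<rho> w"
    proof clarify
      fix g assume g: "g \<in> carrier G" "act \<rho> g w = act \<rho> g0 w"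
      then have "inv g0 \<otimes> g \<in> stab G \<rho> w"
        using assms by (simp add: stab_def act_mult act_inv_act)
      moreover have "g = g0 \<otimes> (inv g0 \<otimes> g)" using g assms by (simp add: m_assoc[symmetric])
      ultimately show "g \<in> (\<otimes>) g0 ` stab G \<rho> w" by blast
    qed
  qed (use assms in \<open>auto simp: stab_def act_mult\<close>)
  moreover have "inj_on ((\<otimes>) g0) (stab G \<rho> w)"
    using assms by (auto simp: stab_def intro!: inj_onI)
  ultimately show ?thesis by (simp add: card_image)
qed

lemma card_orbit_mult_card_stab:
  assumes fin: "finite (carrier G)"
  shows "card (orbit G \<rho> w) * card (stab G \<rho> w) = order G"
proof -
  define A where "A v = {g \<in> carrier G. act \<rho> g w = v}" for v
  have "carrier G = (\<Union>v\<in>orbit G \<rho> w. A v)"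
    unfolding A_def orbit_def by blast
  then have "order G = card (\<Union>v\<in>orbit G \<rho> w. A v)"
    unfolding order_def by simp
  also have "\<dots> = (\<Sum>v\<in>orbit G \<rho> w. card (A v))"
  proof (rule card_UN_disjoint)
    show "finite (orbit G \<rho> w)" using fin by (rule finite_orbit)
    show "\<forall>v\<in>orbit G \<rho> w. finite (A v)" unfolding A_def using fin by simp
    show "\<forall>u\<in>orbit G \<rho> w. \<forall>v\<in>orbit G \<rho> w. u \<noteq> v \<longrightarrow> A u \<inter> A v = {}"
      unfolding A_def by blast
  qed
  also have "\<dots> = (\<Sum>v\<in>orbit G \<rho> w. card (stab G \<rho> w))"
  proof (rule sum.cong)
    fix v assume "v \<in> orbit G \<rho> w"
    then obtain g0 where "g0 \<in> carrier G" "v = act \<rho> g0 w" by (auto simp: orbit_def)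
    then show "card (A v) = card (stab G \<rho> w)" unfolding A_def by (simp add: card_act_fibre)
  qed simp
  finally show ?thesis by simp
qed

lemma card_orbit_eq_card_rcosets_stab:
  assumes fin: "finite (carrier G)"
  shows "card (orbit G \<rho> w) = card (rcosets (stab G \<rho> w))"
proof -
  have "finite (stab G \<rho> w)"
    using fin subgroup.subset[OF subgroup_stab] by (rule rev_finite_subset)
  then have "card (stab G \<rho> w) \<noteq> 0"
    using subgroup.one_closed[OF subgroup_stab] by auto
  moreover have "card (orbit G \<rho> w) * card (stab G \<rho> w)
      = card (rcosets (stab G \<rho> w)) * card (stab G \<rho> w)"
    by (simp only: card_orbit_mult_card_stab[OF fin] lagrange[OF subgroup_stab])
  ultimately show ?thesis by (rule mult_right_cancel[THEN iffD1])
qed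

end

lemma divisor_degree_kanev_divisor:
  assumes "finite F" "bij_betw \<mu> F Orb" "c \<in> F"
  shows "divisor_degree (kanev_divisor B w F \<mu> c)
    = (\<Sum>v\<in>Orb. bil B (\<mu> c) v) - bil B (\<mu> c) (\<mu> c) - (of_nat (card Orb) - 1) * (bil B w w + 1)"
proof -
  let ?u = "\<mu> c" and ?k = "bil B w w"
  have u: "?u \<in> Orb" using assms(2,3) by (rule bij_betw_apply)
  have fin: "finite Orb" using bij_betw_finite[OF assms(2)] assms(1) by simp
  have "divisor_degree (kanev_divisor B w F \<mu> c) = (\<Sum>p\<in>F. kanev_divisor B w F \<mu> c p)"
    unfolding divisor_degree_def
    by (rule sum.mono_neutral_left) (auto simp: kanev_divisor_def assms(1) split: if_splits)
  also have "\<dots> = (\<Sum>p\<in>F. (\<lambda>v. if v \<noteq> ?u then bil B ?u v - ?k - 1 else 0) (\<mu> p))"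
    by (intro sum.cong) (auto simp: kanev_divisor_def)
  also have "\<dots> = (\<Sum>v\<in>Orb. if v \<noteq> ?u then bil B ?u v - ?k - 1 else 0)"
    using sum.reindex_bij_betw[OF assms(2)] by simp
  also have "\<dots> = (\<Sum>v\<in>Orb - {?u}. bil B ?u v - ?k - 1)"
    by (rule sum.mono_neutral_cong_right) (use fin in auto)
  also have "\<dots> = (\<Sum>v\<in>Orb - {?u}. bil B ?u v) - of_nat (card (Orb - {?u})) * (?k + 1)"
    by (simp add: sum_subtractf algebra_simps)
  also have "(\<Sum>v\<in>Orb - {?u}. bil B ?u v) = (\<Sum>v\<in>Orb. bil B ?u v) - bil B ?u ?u"
    using sum.remove[OF fin u, of "bil B ?u"] by simp
  also have "of_nat (card (Orb - {?u})) = (of_nat (card Orb) :: rat) - 1"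
  proof -
    have "0 < card Orb" using u fin card_gt_0_iff by blast
    then show ?thesis using u fin by (simp add: of_nat_diff Suc_le_eq)
  qed
  finally show ?thesis .
qed

text \<open>Only the invariance of the form enters.\<close>

theorem corollary3p8:
  fixes G :: "('g, 'b) monoid_scheme"
    and \<rho> :: "'g \<Rightarrow> int^'n^'n"
    and w :: "rat^'n"
    and B :: "rat^'n^'n"
    and F :: "'c set"
    and \<mu> :: "'c \<Rightarrow> rat^'n"
    and c :: 'c
  assumes "group G" and "finite (carrier G)"
    and "is_int_rep G \<rho>"
    and "abs_irreducible G \<rho>"
    and "\<exists>g\<in>carrier G. \<rho> g \<noteq> mat 1"
    and "is_weight G \<rho> w"
    and "normalized_form G \<rho> w B"
    and "finite F" and "bij_betw \<mu> F (orbit G \<rho> w)" and "c \<in> F"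
  shows "divisor_degree (kanev_divisor B w F \<mu> c)
           = 1 - of_nat (card (rcosets\<^bsub>G\<^esub> (stab G \<rho> w))) * (bil B w w + 1)"
proof -
  interpret int_rep G \<rho> using assms(1,3) by (simp add: int_rep_def int_rep_axioms_def)
  let ?O = "orbit G \<rho> w"
  have "\<Sum>?O = 0"
    using abs_irreducible_fixed_vector_eq_0 assms(4,5) act_orbit_sum by blast
  then have orbit_row_sum: "(\<Sum>v\<in>?O. bil B (\<mu> c) v) = 0"
    using bil_sum_right[of B "\<mu> c" "\<lambda>v. v" ?O] by (simp add: bil_zero_right)
  have "\<mu> c \<in> ?O" using assms(9,10) by (rule bij_betw_apply)
  then obtain g where "g \<in> carrier G" "\<mu> c = act \<rho> g w" by (auto simp: orbit_def)
  then have "bil B (\<mu> c) (\<mu> c) = bil B w w"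
    using assms(7) by (simp add: normalized_form_def sym_inv_form_def)
  then have "divisor_degree (kanev_divisor B w F \<mu> c)
      = - bil B w w - (of_nat (card ?O) - 1) * (bil B w w + 1)"
    using divisor_degree_kanev_divisor[OF assms(8,9,10), where B = B and w = w] orbit_row_sum
    by simp
  also have "\<dots> = 1 - of_nat (card ?O) * (bil B w w + 1)"
    by (simp add: left_diff_distrib)
  finally show ?thesis by (simp only: card_orbit_eq_card_rcosets_stab[OF assms(2)])
qed

end
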